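(* Let $1\le p<q$ and $u=0^{q-p}1^p$. Then $$\mathcal{S}_{q-p}(u)=\sum_{j=1}^{q}\min(j-1,\;p,\;q-p,\;q+1-j)\,2^{q-j}.$$
   Context: For a word $x=x_1\cdots x_n$ over $\{0,1\}$, $(x)_2=\sum_{i=1}^n x_i2^{n-i}$. For $w\in\{0,1\}^q$, $\mathcal{O}_1(w)\le\dots\le\mathcal{O}_q(w)$ are the $q$ cyclic shifts $w,\sigma(w),\dots,\sigma^{q-1}(w)$ (where $\sigma(w_1\cdots w_n)=w_2\cdots w_nw_1$) sorted lexicographically with $0<1$, $\mathcal{I}_k(w)=(\mathcal{O}_k(w))_2$, and $\mathcal{S}_i(w)=\sum_{k=1}^i\mathcal{I}_k(w)$. *)

theory Defs
  imports Main "HOL-Library.List_Lexorder"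
begin

text \<open>Binary words are lists of naturals over {0,1}. For words of equal length the
lexicographic order of List_Lexorder (with 0 < 1) is the usual lexicographic order.\<close>

definition bin_val :: "nat list \<Rightarrow> nat" where
  "bin_val x = (\<Sum>i<length x. x ! i * 2 ^ (length x - 1 - i))"

text \<open>The cyclic shift sigma(w1...wn) = w2...wn w1 is rotate1; sigma^k = rotate k.\<close>
definition sorted_shifts :: "nat list \<Rightarrow> nat list list" where
  "sorted_shifts w = sort (map (\<lambda>k. rotate k w) [0..<length w])"

definition O_shift :: "nat list \<Rightarrow> nat \<Rightarrow> nat list" where
  "O_shift w k = sorted_shifts w ! (k - 1)"

definition I_val :: "nat list \<Rightarrow> nat \<Rightarrow> nat" where
  "I_val w k = bin_val (O_shift w k)"

definition S_sum :: "nat list \<Rightarrow> nat \<Rightarrow> nat" where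
  "S_sum w i = (\<Sum>k=1..i. I_val w k)"

end

theory Submission
  imports Defs "HOL-Library.Multiset"
begin

text \<open>Write \<open>m = q - p\<close> and \<open>u = 0\<^sup>m 1\<^sup>p\<close>. Rotating \<open>u\<close> by \<open>k \<le> m\<close> moves zeros to
  the back, giving \<open>0\<^sup>m\<^sup>-\<^sup>k 1\<^sup>p 0\<^sup>k\<close>; these are the \<open>m\<close> smallest shifts, in increasing
  order of \<open>k\<close>, and the remaining ones start with a \<open>1\<close>. Their values are \<open>(2\<^sup>p - 1) 2\<^sup>k\<close>,
  so \<open>\<S>\<^sub>m(u) = (2\<^sup>p - 1)(2\<^sup>m - 1)\<close>. Multiplying out the two geometric sums, the
  coefficient of \<open>2\<^sup>s\<close> counts the pairs \<open>a < p\<close>, \<open>b < m\<close> with \<open>a + b = s\<close>, which is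
  \<open>min(s + 1, p, m, p + m - 1 - s)\<close>; substituting \<open>s = q - j\<close> gives the stated sum.\<close>

lemma append_Cons_0_less_append_Cons_1: "u @ (0::nat) # v < u @ 1 # w"
  by (induct u) auto

definition zeros_moved_back :: "nat \<Rightarrow> nat \<Rightarrow> nat \<Rightarrow> nat list" where
  "zeros_moved_back m p k = replicate (m - k) 0 @ replicate p 1 @ replicate k 0"

definition ones_moved_front :: "nat \<Rightarrow> nat \<Rightarrow> nat \<Rightarrow> nat list" where
  "ones_moved_front m p i = replicate (p - i) 1 @ replicate m 0 @ replicate i 1"

lemma rotate_zeros_ones_le:
  assumes "k \<le> m"
  shows "rotate k (replicate m 0 @ replicate p 1) = zeros_moved_back m p k"
proof -
  have "replicate m (0::nat) @ replicate p 1 = replicate k 0 @ (replicate (m - k) 0 @ replicate p 1)"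
    using assms by (metis append_assoc le_add_diff_inverse replicate_add)
  then show ?thesis
    unfolding zeros_moved_back_def by (metis append_assoc length_replicate rotate_append)
qed

lemma rotate_zeros_ones_add:
  assumes "i \<le> p"
  shows "rotate (m + i) (replicate m 0 @ replicate p 1) = ones_moved_front m p i"
proof -
  have "replicate m (0::nat) @ replicate p 1 = (replicate m 0 @ replicate i 1) @ replicate (p - i) 1"
    using assms by (metis append_assoc le_add_diff_inverse replicate_add)
  then show ?thesis
    unfolding ones_moved_front_def by (metis append_assoc length_append length_replicate rotate_append)
qed

lemma zeros_moved_back_strict_mono:
  assumes "i < j" "j < m" "1 \<le> p"
  shows "zeros_moved_back m p i < zeros_moved_back m p j"
proof -
  have "m - i = (m - j) + Suc (j - i - 1)"
    using assms by simp
  then have "zeros_moved_back m p i =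
      replicate (m - j) 0 @ 0 # (replicate (j - i - 1) 0 @ replicate p 1 @ replicate i 0)"
    unfolding zeros_moved_back_def by (simp only: replicate_add replicate_Suc) simp
  moreover have "p = Suc (p - 1)"
    using assms by simp
  then have "zeros_moved_back m p j = replicate (m - j) 0 @ 1 # (replicate (p - 1) 1 @ replicate j 0)"
    unfolding zeros_moved_back_def by (metis append_Cons replicate_Suc)
  ultimately show ?thesis
    by (metis append_Cons_0_less_append_Cons_1)
qed

lemma ones_moved_front_strict_antimono:
  assumes "i < j" "j < p" "1 \<le> m"
  shows "ones_moved_front m p j < ones_moved_front m p i"
proof -
  have "p - i = (p - j) + Suc (j - i - 1)"
    using assms by simp
  then have "ones_moved_front m p i =
      replicate (p - j) 1 @ 1 # (replicate (j - i - 1) 1 @ replicate m 0 @ replicate i 1)"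
    unfolding ones_moved_front_def by (simp only: replicate_add replicate_Suc) simp
  moreover have "m = Suc (m - 1)"
    using assms by simp
  then have "ones_moved_front m p j = replicate (p - j) 1 @ 0 # (replicate (m - 1) 0 @ replicate j 1)"
    unfolding ones_moved_front_def by (metis append_Cons replicate_Suc)
  ultimately show ?thesis
    by (metis append_Cons_0_less_append_Cons_1)
qed

lemma zeros_moved_back_less_ones_moved_front:
  assumes "i < m" "j < p"
  shows "zeros_moved_back m p i < ones_moved_front m p j"
proof -
  have "zeros_moved_back m p i = [] @ 0 # (replicate (m - i - 1) 0 @ replicate p 1 @ replicate i 0)"
    using assms unfolding zeros_moved_back_def by (cases "m - i") auto
  moreover have "ones_moved_front m p j = [] @ 1 # (replicate (p - j - 1) 1 @ replicate m 0 @ replicate j 1)"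
    using assms unfolding ones_moved_front_def by (cases "p - j") auto
  ultimately show ?thesis
    by (metis append_Cons_0_less_append_Cons_1)
qed

lemma sorted_shifts_zeros_ones:
  assumes "1 \<le> p" "1 \<le> m"
  shows "sorted_shifts (replicate m 0 @ replicate p 1) =
    map (zeros_moved_back m p) [0..<m] @ map (ones_moved_front m p) (rev [0..<p])"
    (is "_ = ?front @ ?back")
proof -
  let ?u = "replicate m (0::nat) @ replicate p 1"
  have "[m..<m + p] = map (\<lambda>i. m + i) [0..<p]"
    using map_add_upt[of m p] by (simp add: add.commute)
  then have "map (\<lambda>k. rotate k ?u) [0..<m + p] =
      map (\<lambda>k. rotate k ?u) [0..<m] @ map (\<lambda>i. rotate (m + i) ?u) [0..<p]"
    by (simp only: upt_add_eq_append[OF le0] map_append map_map comp_def)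
  also have "\<dots> = ?front @ map (ones_moved_front m p) [0..<p]"
    using rotate_zeros_ones_le rotate_zeros_ones_add by simp
  finally have shifts: "mset (map (\<lambda>k. rotate k ?u) [0..<m + p]) = mset (?front @ ?back)"
    by (simp add: rev_map[symmetric])
  have "sorted ?front"
    unfolding sorted_iff_nth_mono_less
    using zeros_moved_back_strict_mono[OF _ _ assms(1)] by (simp add: less_imp_le)
  moreover have "sorted ?back"
    unfolding sorted_iff_nth_mono_less
    using ones_moved_front_strict_antimono[of "p - Suc j" "p - Suc i" p m for i j] assms
    by (simp add: rev_nth less_imp_le diff_less_mono2)
  moreover have "\<forall>x\<in>set ?front. \<forall>y\<in>set ?back. x \<le> y"
    using zeros_moved_back_less_ones_moved_front by fastforce
  ultimately have "sorted (?front @ ?back)"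
    by (simp only: sorted_append)
  with shifts show ?thesis
    unfolding sorted_shifts_def length_append length_replicate
    by (metis properties_for_sort)
qed

lemma bin_val_Cons: "bin_val (x # xs) = x * 2 ^ length xs + bin_val xs"
  unfolding bin_val_def length_Cons sum.lessThan_Suc_shift by simp

lemma bin_val_append: "bin_val (xs @ ys) = bin_val xs * 2 ^ length ys + bin_val ys"
  by (induct xs) (simp_all add: bin_val_def[of "[]"] bin_val_Cons power_add algebra_simps)

lemma bin_val_replicate_0: "bin_val (replicate n 0) = 0"
  by (induct n) (simp_all add: bin_val_def[of "[]"] bin_val_Cons)

lemma bin_val_replicate_1: "bin_val (replicate n 1) = 2 ^ n - 1"
  by (induct n) (simp_all add: bin_val_def[of "[]"] bin_val_Cons)

lemma bin_val_zeros_moved_back: "bin_val (zeros_moved_back m p k) = (2 ^ p - 1) * 2 ^ k"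
  using bin_val_replicate_1[of p] unfolding zeros_moved_back_def
  by (simp add: bin_val_append bin_val_replicate_0)

lemma S_sum_zeros_ones:
  assumes "1 \<le> p" "1 \<le> m"
  shows "S_sum (replicate m 0 @ replicate p 1) m = (2 ^ p - 1) * (2 ^ m - 1)"
proof -
  have "S_sum (replicate m 0 @ replicate p 1) m = (\<Sum>k=1..m. (2 ^ p - 1) * 2 ^ (k - 1))"
    unfolding S_sum_def I_val_def O_shift_def sorted_shifts_zeros_ones[OF assms]
    by (rule sum.cong) (auto simp: nth_append bin_val_zeros_moved_back)
  also have "\<dots> = (\<Sum>k<m. (2 ^ p - 1) * 2 ^ k)"
    by (rule sum.reindex_bij_witness[of _ Suc "\<lambda>k. k - 1"]) auto
  finally show ?thesis
    by (simp add: mask_eq_sum_exp_nat lessThan_def sum_distrib_left)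
qed

lemma card_sum_window:
  assumes "s < p + m"
  shows "card {a \<in> {..<p}. a \<le> s \<and> s < a + m} = min (min (p + m - s - 1) p) (min m (s + 1))"
proof -
  have "{a \<in> {..<p}. a \<le> s \<and> s < a + m} = {s + 1 - m..<min p (s + 1)}"
    by auto
  then show ?thesis
    using assms by simp
qed

lemma geometric_sum_mult_geometric_sum:
  "(\<Sum>a<p. (2::nat) ^ a) * (\<Sum>b<m. 2 ^ b) =
    (\<Sum>s<p + m. min (min (p + m - s - 1) p) (min m (s + 1)) * 2 ^ s)"
proof -
  let ?window = "\<lambda>s a. a \<le> s \<and> s < a + m"
  have row: "(\<Sum>b<m. (2::nat) ^ (a + b)) = (\<Sum>s<p + m. if ?window s a then 2 ^ s else 0)"
    if "a < p" for a
  proof -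
    have "(\<Sum>b<m. (2::nat) ^ (a + b)) = (\<Sum>s\<in>{a..<a + m}. 2 ^ s)"
      by (rule sum.reindex_bij_witness[of _ "\<lambda>s. s - a" "\<lambda>b. a + b"]) auto
    also have "{a..<a + m} = {s \<in> {..<p + m}. ?window s a}"
      using that by auto
    also have "(\<Sum>s\<in>\<dots>. (2::nat) ^ s) = (\<Sum>s<p + m. if ?window s a then 2 ^ s else 0)"
      by (rule sum.inter_filter) simp
    finally show ?thesis .
  qed
  have "(\<Sum>a<p. (2::nat) ^ a) * (\<Sum>b<m. 2 ^ b) = (\<Sum>a<p. \<Sum>b<m. 2 ^ (a + b))"
    by (simp add: sum_product power_add)
  also have "\<dots> = (\<Sum>a<p. \<Sum>s<p + m. if ?window s a then 2 ^ s else 0)"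
    using row by simp
  also have "\<dots> = (\<Sum>s<p + m. \<Sum>a<p. if ?window s a then 2 ^ s else 0)"
    by (rule sum.swap)
  also have "\<dots> = (\<Sum>s<p + m. card {a \<in> {..<p}. ?window s a} * 2 ^ s)"
    by (simp add: sum.inter_filter[symmetric])
  also have "\<dots> = (\<Sum>s<p + m. min (min (p + m - s - 1) p) (min m (s + 1)) * 2 ^ s)"
    using card_sum_window by (intro sum.cong) simp_all
  finally show ?thesis .
qed

theorem mainTheorem5:
  fixes p q :: nat
  assumes "1 \<le> p" and "p < q"
  shows "S_sum (replicate (q - p) 0 @ replicate p 1) (q - p) =
         (\<Sum>j=1..q. min (min (j - 1) p) (min (q - p) (q + 1 - j)) * 2 ^ (q - j))"
proof -
  define m where "m = q - p"
  have "1 \<le> m" and q: "q = p + m"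
    using assms unfolding m_def by auto
  have "S_sum (replicate m 0 @ replicate p 1) m = (\<Sum>a<p. (2::nat) ^ a) * (\<Sum>b<m. 2 ^ b)"
    using S_sum_zeros_ones[OF \<open>1 \<le> p\<close> \<open>1 \<le> m\<close>] by (simp add: mask_eq_sum_exp_nat lessThan_def)
  also have "\<dots> = (\<Sum>s<p + m. min (min (p + m - s - 1) p) (min m (s + 1)) * 2 ^ s)"
    by (rule geometric_sum_mult_geometric_sum)
  also have "\<dots> = (\<Sum>j=1..q. min (min (j - 1) p) (min m (q + 1 - j)) * 2 ^ (q - j))"
    by (rule sum.reindex_bij_witness[of _ "\<lambda>j. q - j" "\<lambda>s. q - s"]) (auto simp: q)
  finally show ?thesis
    unfolding m_def .
qed

end
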